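(* Let $(\mathbb{X},\oplus,\otimes,\mathbb{0},\mathbb{1})$ be a linearly ordered, algebraically complete idempotent semifield, and let $\bm{A}\in\mathbb{X}^{n\times n}$ be a reciprocal matrix (i.e. $\bm{A}^{-}=\bm{A}$) with no zero entries, with spectral radius $\lambda$, and let $\bm{A}_{\lambda}=\lambda^{-1}\bm{A}$. Consider the problem of minimizing $d(\bm{A},\bm{x}\bm{x}^{-})$ over all regular vectors $\bm{x}\in\mathbb{X}^{n}$. Then the minimum value equals $\lambda$, and the set of all solutions is $\{\bm{x}=\bm{A}_{\lambda}^{\ast}\bm{u}: \bm{u}\in\mathbb{X}^n,\ \bm{u}\neq\bm{0}\}$.
   Context: An idempotent semifield is a set $\mathbb{X}$ with associative, commutative operations $\oplus$ (addition) and $\otimes$ (multiplication, usually omitted in writing) with neutral elements $\mathbb{0}$ and $\mathbb{1}$, multiplication distributing over addition, idempotent addition ($x\oplus x=x$), and every nonzero $x$ having an inverse $x^{-1}$ with $xx^{-1}=\mathbb{1}$. It is assumed linearly ordered by the order $x\le y \iff x\oplus y=y$, and algebraically complete: $x^p=a$ is solvable for every $a$ and integer $p>0$, so rational powers are defined. Matrix and vector operations use the usual formulas with $\oplus,\otimes$ in place of $+,\times$; $\bm{0}$ is the zero vector; a vector is regular if it has no zero entries. For a nonzero column vector $\bm{x}=(x_i)$, $\bm{x}^{-}$ is the row vector with entries $x_i^{-1}$ if $x_i\ne\mathbb{0}$ and $\mathbb{0}$ otherwise. For a nonzero matrix $\bm{A}=(a_{ij})$, $\bm{A}^{-}=(a^{-}_{ij})$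 with $a^{-}_{ij}=a_{ji}^{-1}$ if $a_{ji}\neq\mathbb{0}$ and $\mathbb{0}$ otherwise. The trace is $\mathrm{tr}\,\bm{A}=a_{11}\oplus\cdots\oplus a_{nn}$. The distance between square matrices is $d(\bm{A},\bm{B})=\mathrm{tr}(\bm{B}^{-}\bm{A})\oplus\mathrm{tr}(\bm{A}^{-}\bm{B})$. $\bm{I}$ is the identity matrix, $\bm{A}^0=\bm{I}$, $\bm{A}^p=\bm{A}^{p-1}\bm{A}$. The spectral radius of $\bm{A}$ of order $n$ is $\lambda=\bigoplus_{k=1}^{n}\bigoplus_{1\le i_1,\ldots,i_k\le n}(a_{i_1i_2}a_{i_2i_3}\cdots a_{i_ki_1})^{1/k}$. For a square matrix $\bm{M}$ of order $n$, $\bm{M}^{\ast}=\bm{I}\oplus\bm{M}\oplus\cdots\oplus\bm{M}^{n-1}$. *)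

theory Defs
  imports Main "HOL-Library.Cardinality"
begin

text \<open>Addition is the idempotent sum (oplus), multiplication is otimes,
  0 and 1 are the neutral elements, the order is x \<le> y iff x + y = y,
  inverse is the multiplicative inverse (with inverse 0 = 0 by convention).\<close>
class idem_semifield = comm_semiring_1 + linorder + inverse +
  assumes add_idem: "x + x = x"
    and le_iff_add: "x \<le> y \<longleftrightarrow> x + y = y"
    and right_inverse: "x \<noteq> 0 \<Longrightarrow> x * inverse x = 1"
    and inverse_zero: "inverse 0 = 0"
    and alg_complete: "0 < p \<Longrightarrow> \<exists>x. x ^ p = a"

definition root :: "nat \<Rightarrow> 'a::idem_semifield \<Rightarrow> 'a" where
  "root k a = (SOME x. x ^ k = a)"

definition mmul :: "('n::finite \<Rightarrow> 'n \<Rightarrow> 'a::idem_semifield) \<Rightarrow> ('n \<Rightarrow> 'n \<Rightarrow> 'a) \<Rightarrow> 'n \<Rightarrow> 'n \<Rightarrow> 'a" where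
  "mmul A B = (\<lambda>i j. \<Sum>k\<in>UNIV. A i k * B k j)"

definition mvec :: "('n::finite \<Rightarrow> 'n \<Rightarrow> 'a::idem_semifield) \<Rightarrow> ('n \<Rightarrow> 'a) \<Rightarrow> 'n \<Rightarrow> 'a" where
  "mvec A x = (\<lambda>i. \<Sum>j\<in>UNIV. A i j * x j)"

definition idm :: "'n \<Rightarrow> 'n \<Rightarrow> 'a::idem_semifield" where
  "idm = (\<lambda>i j. if i = j then 1 else 0)"

primrec mpow :: "('n::finite \<Rightarrow> 'n \<Rightarrow> 'a::idem_semifield) \<Rightarrow> nat \<Rightarrow> 'n \<Rightarrow> 'n \<Rightarrow> 'a" where
  "mpow A 0 = idm"
| "mpow A (Suc p) = mmul (mpow A p) A"

definition mstar :: "('n::finite \<Rightarrow> 'n \<Rightarrow> 'a::idem_semifield) \<Rightarrow> 'n \<Rightarrow> 'n \<Rightarrow> 'a" where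
  "mstar M = (\<lambda>i j. \<Sum>p<CARD('n). mpow M p i j)"

text \<open>A^- : (A^-)_ij = a_ji^{-1} if a_ji nonzero, 0 otherwise\<close>
definition mconj :: "('n \<Rightarrow> 'n \<Rightarrow> 'a::idem_semifield) \<Rightarrow> 'n \<Rightarrow> 'n \<Rightarrow> 'a" where
  "mconj A = (\<lambda>i j. inverse (A j i))"

definition outer_conj :: "('n \<Rightarrow> 'a::idem_semifield) \<Rightarrow> 'n \<Rightarrow> 'n \<Rightarrow> 'a" where
  "outer_conj x = (\<lambda>i j. x i * inverse (x j))"

definition mtrace :: "('n::finite \<Rightarrow> 'n \<Rightarrow> 'a::idem_semifield) \<Rightarrow> 'a" where
  "mtrace A = (\<Sum>i\<in>UNIV. A i i)"

definition mdist :: "('n::finite \<Rightarrow> 'n \<Rightarrow> 'a::idem_semifield) \<Rightarrow> ('n \<Rightarrow> 'n \<Rightarrow> 'a) \<Rightarrow> 'a" where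
  "mdist A B = mtrace (mmul (mconj B) A) + mtrace (mmul (mconj A) B)"

definition spec_rad :: "('n::finite \<Rightarrow> 'n \<Rightarrow> 'a::idem_semifield) \<Rightarrow> 'a" where
  "spec_rad A = (\<Sum>k\<in>{1..CARD('n)}. \<Sum>is\<in>{is :: 'n list. length is = k}.
      root k (\<Prod>m<k. A (is ! m) (is ! ((m + 1) mod k))))"

definition regular :: "('n \<Rightarrow> 'a::idem_semifield) \<Rightarrow> bool" where
  "regular x \<longleftrightarrow> (\<forall>i. x i \<noteq> 0)"

end

theory Submission
  imports Defs
begin

text \<open>
  For reciprocal \<open>A\<close> and regular \<open>x\<close> the distance \<open>d(A, x x\<^sup>-)\<close> is the scalar
  \<open>x\<^sup>- A x\<close>, the sum of all \<open>x\<^sub>i\<^sup>-\<^sup>1 a\<^sub>i\<^sub>j x\<^sub>j\<close>. A cycle product of \<open>A\<close> is unchanged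
  when every \<open>a\<^sub>i\<^sub>j\<close> is replaced by \<open>x\<^sub>i\<^sup>-\<^sup>1 a\<^sub>i\<^sub>j x\<^sub>j\<close>, so a cycle of length \<open>k\<close> has
  product at most \<open>(x\<^sup>- A x)\<^sup>k\<close>, and taking \<open>k\<close>-th roots gives \<open>\<lambda> \<le> x\<^sup>- A x\<close>. Hence
  \<open>x\<close> is optimal iff \<open>x\<^sup>- A x \<le> \<lambda>\<close>, i.e. iff \<open>A\<^sub>\<lambda> x \<le> x\<close>.

  No cycle of \<open>A\<^sub>\<lambda>\<close> has product above \<open>\<one>\<close>, so cutting cycles out of walks bounds
  every walk product by an entry of \<open>A\<^sub>\<lambda>\<^sup>*\<close>; this gives \<open>A\<^sub>\<lambda> A\<^sub>\<lambda>\<^sup>* \<le> A\<^sub>\<lambda>\<^sup>*\<close>.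
  Conversely \<open>A\<^sub>\<lambda> x \<le> x\<close> propagates along walks to \<open>A\<^sub>\<lambda>\<^sup>* x \<le> x\<close>. So the solutions
  of \<open>A\<^sub>\<lambda> x \<le> x\<close> are the fixed points of \<open>A\<^sub>\<lambda>\<^sup>*\<close>, i.e. the vectors \<open>A\<^sub>\<lambda>\<^sup>* u\<close> with
  \<open>u \<noteq> \<zero>\<close>; they are regular because \<open>A\<close> has no zero entries.
\<close>

section \<open>Arithmetic in an idempotent semifield\<close>

context idem_semifield
begin

lemma add_eq_max: "x + y = max x y"
  by (metis add.commute le_iff_add linear max.absorb1 max.absorb2)

lemma le_iff_exists_add: "a \<le> b \<longleftrightarrow> (\<exists>c. b = a + c)"
proof
  assume "a \<le> b"
  then have "b = a + b"
    using le_iff_add by simp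
  then show "\<exists>c. b = a + c" ..
next
  assume "\<exists>c. b = a + c"
  then obtain c where "b = a + c" ..
  then have "a + b = b"
    by (simp add: add_idem flip: add.assoc)
  then show "a \<le> b"
    using le_iff_add by simp
qed

lemma idem_add_left_mono: "a \<le> b \<Longrightarrow> c + a \<le> c + b"
  unfolding add_eq_max by (rule max.mono) simp_all

lemma idem_mult_left_mono: "a \<le> b \<Longrightarrow> c * a \<le> c * b"
  using le_iff_add by (metis distrib_left)

lemma idem_zero_less_one: "0 < 1"
  using le_iff_add[of 0 1] by (simp add: order.not_eq_order_implies_strict)

lemma idem_no_zero_divisors: "a \<noteq> 0 \<Longrightarrow> b \<noteq> 0 \<Longrightarrow> a * b \<noteq> 0"
  by (metis mult.assoc mult_1_right mult_zero_left right_inverse)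

end

subclass (in idem_semifield) canonically_ordered_monoid_add
  by standard (fact le_iff_exists_add)

subclass (in idem_semifield) ordered_comm_semiring
  by standard (fact idem_add_left_mono, rule idem_mult_left_mono)

subclass (in idem_semifield) ordered_semiring_1
  by standard (fact idem_zero_less_one)

subclass (in idem_semifield) semiring_1_no_zero_divisors
  by standard (fact idem_no_zero_divisors)

context idem_semifield
begin

lemma sum_le_iff: "finite S \<Longrightarrow> sum f S \<le> c \<longleftrightarrow> (\<forall>i\<in>S. f i \<le> c)"
  by (induction S rule: finite_induct) (auto simp: add_eq_max)

lemma prod_le_power_card: "(\<And>i. i \<in> S \<Longrightarrow> f i \<le> c) \<Longrightarrow> prod f S \<le> c ^ card S"
  by (induction S rule: infinite_finite_induct) (auto intro: mult_mono)

lemma inverse_mult_self: "x \<noteq> 0 \<Longrightarrow> inverse x * x = 1"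
  by (simp add: mult.commute right_inverse)

lemma inverse_neq_0: "x \<noteq> 0 \<Longrightarrow> inverse x \<noteq> 0"
  using right_inverse[of x] by (metis mult_zero_right zero_neq_one)

lemma inverse_eq_of_mult_eq_1:
  assumes "x * y = 1"
  shows "inverse x = y"
proof -
  have "x \<noteq> 0"
    using assms by auto
  have "inverse x = inverse x * (x * y)"
    using assms by simp
  also have "\<dots> = y"
    using \<open>x \<noteq> 0\<close> by (simp add: inverse_mult_self flip: mult.assoc)
  finally show ?thesis .
qed

lemma mult_le_cancel_right_nonzero:
  assumes "c \<noteq> 0"
  shows "a * c \<le> b * c \<longleftrightarrow> a \<le> b"
proof
  assume "a * c \<le> b * c"
  then have "a * c * inverse c \<le> b * c * inverse c"
    by (rule mult_right_mono) simp
  with assms show "a \<le> b"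
    by (simp add: mult.assoc right_inverse)
qed (rule mult_right_mono, simp_all)

lemma mult_strict_left_mono_nonzero: "a < b \<Longrightarrow> c \<noteq> 0 \<Longrightarrow> c * a < c * b"
  by (simp add: less_le_not_le mult.commute[of c] mult_le_cancel_right_nonzero)

lemma power_strict_mono':
  assumes "a < b" "0 < n"
  shows "a ^ n < b ^ n"
proof -
  obtain m where n: "n = Suc m"
    using assms(2) by (cases n) auto
  have "b \<noteq> 0"
    using assms(1) zero_le[of a] leD by blast
  have "a ^ n = a ^ m * a"
    by (simp add: n mult.commute)
  also have "\<dots> \<le> b ^ m * a"
    using assms(1) by (intro mult_right_mono power_mono) simp_all
  also have "\<dots> < b ^ m * b"
    using assms(1) \<open>b \<noteq> 0\<close> by (simp add: mult_strict_left_mono_nonzero)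
  also have "\<dots> = b ^ n"
    by (simp add: n mult.commute)
  finally show ?thesis .
qed

end

lemma root_pow: "0 < k \<Longrightarrow> root k a ^ k = a"
  unfolding root_def using alg_complete[of k a] by (rule someI_ex)

lemma root_le_iff:
  assumes "0 < k"
  shows "root k a \<le> c \<longleftrightarrow> a \<le> c ^ k"
proof
  assume "root k a \<le> c"
  then have "root k a ^ k \<le> c ^ k"
    by (simp add: power_mono)
  then show "a \<le> c ^ k"
    unfolding root_pow[OF assms] .
next
  assume "a \<le> c ^ k"
  show "root k a \<le> c"
  proof (rule ccontr)
    assume "\<not> root k a \<le> c"
    then have "c ^ k < root k a ^ k"
      using assms by (simp add: power_strict_mono')
    then have "c ^ k < a"
      unfolding root_pow[OF assms] .
    with \<open>a \<le> c ^ k\<close> show False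
      by (simp add: leD)
  qed
qed

section \<open>Cycles and the spectral radius\<close>

definition cycprod :: "('n \<Rightarrow> 'n \<Rightarrow> 'a::idem_semifield) \<Rightarrow> 'n list \<Rightarrow> 'a" where
  "cycprod M is = (\<Prod>m<length is. M (is ! m) (is ! ((m + 1) mod length is)))"

lemma cycprod_scale: "cycprod (\<lambda>i j. c * A i j) is = c ^ length is * cycprod A is"
  by (simp add: cycprod_def prod.distrib)

lemma spec_rad_le_iff:
  fixes A :: "'n::finite \<Rightarrow> 'n \<Rightarrow> 'a::idem_semifield"
  shows "spec_rad A \<le> c
    \<longleftrightarrow> (\<forall>is. is \<noteq> [] \<longrightarrow> length is \<le> CARD('n) \<longrightarrow> cycprod A is \<le> c ^ length is)"
proof -
  let ?n = "CARD('n)"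
  have fin: "finite {is :: 'n list. length is = k}" for k
    using finite_lists_length_eq[of "UNIV :: 'n set" k] by simp
  have "spec_rad A = (\<Sum>k\<in>{1..?n}. \<Sum>is\<in>{is. length is = k}. root k (cycprod A is))"
    unfolding spec_rad_def cycprod_def by (intro sum.cong refl) simp
  then have "spec_rad A \<le> c
      \<longleftrightarrow> (\<forall>k\<in>{1..?n}. \<forall>is\<in>{is. length is = k}. root k (cycprod A is) \<le> c)"
    by (simp add: sum_le_iff fin)
  also have "\<dots> \<longleftrightarrow> (\<forall>is. is \<noteq> [] \<longrightarrow> length is \<le> ?n \<longrightarrow> root (length is) (cycprod A is) \<le> c)"
    by (auto simp: Suc_le_eq)
  also have "\<dots> \<longleftrightarrow> (\<forall>is. is \<noteq> [] \<longrightarrow> length is \<le> ?n \<longrightarrow> cycprod A is \<le> c ^ length is)"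
    by (simp add: root_le_iff)
  finally show ?thesis .
qed

lemma cycprod_le_1:
  fixes M :: "'n::finite \<Rightarrow> 'n \<Rightarrow> 'a::idem_semifield"
  assumes "spec_rad M \<le> 1" "is \<noteq> []" "length is \<le> CARD('n)"
  shows "cycprod M is \<le> 1"
  using spec_rad_le_iff[of M 1] assms by simp

lemma spec_rad_neq_0:
  fixes A :: "'n::finite \<Rightarrow> 'n \<Rightarrow> 'a::idem_semifield"
  assumes "A i i \<noteq> 0"
  shows "spec_rad A \<noteq> 0"
proof
  assume "spec_rad A = 0"
  have "cycprod A [i] \<le> spec_rad A ^ length [i]"
    by (rule spec_rad_le_iff[THEN iffD1, rule_format, OF order_refl]) (simp_all add: Suc_leI)
  with \<open>spec_rad A = 0\<close> assms show False
    by (simp add: cycprod_def)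
qed

lemma spec_rad_normalize_le_1:
  fixes A :: "'n::finite \<Rightarrow> 'n \<Rightarrow> 'a::idem_semifield"
  assumes "spec_rad A \<noteq> 0"
  shows "spec_rad (\<lambda>i j. inverse (spec_rad A) * A i j) \<le> 1"
  unfolding spec_rad_le_iff power_one
proof (intro allI impI)
  fix "is" :: "'n list"
  assume "is \<noteq> []" "length is \<le> CARD('n)"
  let ?r = "spec_rad A" and ?k = "length is"
  have "cycprod A is \<le> ?r ^ ?k"
    using spec_rad_le_iff[of A ?r] \<open>is \<noteq> []\<close> \<open>?k \<le> CARD('n)\<close> by simp
  then have "inverse ?r ^ ?k * cycprod A is \<le> inverse ?r ^ ?k * ?r ^ ?k"
    by (rule mult_left_mono) simp
  also have "\<dots> = 1"
    using assms by (simp add: inverse_mult_self flip: power_mult_distrib)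
  finally show "cycprod (\<lambda>i j. inverse ?r * A i j) is \<le> 1"
    by (simp add: cycprod_scale)
qed

section \<open>Walks\<close>

definition walkprod :: "('n \<Rightarrow> 'n \<Rightarrow> 'a::idem_semifield) \<Rightarrow> (nat \<Rightarrow> 'n) \<Rightarrow> nat \<Rightarrow> 'a" where
  "walkprod M w p = (\<Prod>m<p. M (w m) (w (Suc m)))"

lemma walkprod_add:
  "walkprod M w (p + q) = walkprod M w p * walkprod M (\<lambda>m. w (p + m)) q"
  by (induction q) (simp_all add: walkprod_def mult.assoc)

lemma walkprod_cong: "(\<And>m. m \<le> p \<Longrightarrow> w m = v m) \<Longrightarrow> walkprod M w p = walkprod M v p"
  unfolding walkprod_def by (rule prod.cong) auto

lemma cycprod_closed_walk:
  assumes "w L = w 0"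
  shows "cycprod M (map w [0..<L]) = walkprod M w L"
  unfolding cycprod_def walkprod_def
proof (rule prod.cong)
  show "{..<length (map w [0..<L])} = {..<L}"
    by simp
next
  fix m assume "m \<in> {..<L}"
  then have m: "m < L" by simp
  then have "w ((m + 1) mod L) = w (Suc m)"
    using assms by (cases "Suc m = L") auto
  with m show "M (map w [0..<L] ! m) (map w [0..<L] ! ((m + 1) mod length (map w [0..<L])))
      = M (w m) (w (Suc m))"
    by simp
qed

lemma walk_revisits:
  fixes w :: "nat \<Rightarrow> 'n::finite"
  obtains a b where "a < b" "b \<le> CARD('n)" "w a = w b"
proof -
  have "\<not> inj_on w {..CARD('n)}"
  proof
    assume "inj_on w {..CARD('n)}"
    then have "card (w ` {..CARD('n)}) = Suc CARD('n)" by (simp add: card_image)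
    moreover have "card (w ` {..CARD('n)}) \<le> CARD('n)" by (rule card_mono) auto
    ultimately show False by simp
  qed
  then show ?thesis
    using that unfolding inj_on_def by (metis atMost_iff linorder_neqE_nat)
qed

lemma walkprod_remove_cycle:
  assumes "a \<le> b" "b \<le> p" "w a = w b"
  shows "walkprod M w p = walkprod M (\<lambda>m. if m < a then w m else w (m + (b - a))) (p - (b - a))
      * cycprod M (map (\<lambda>m. w (a + m)) [0..<b - a])"
proof -
  define L where "L = b - a"
  define v where "v = (\<lambda>m. if m < a then w m else w (m + L))"
  have cycle: "cycprod M (map (\<lambda>m. w (a + m)) [0..<L]) = walkprod M (\<lambda>m. w (a + m)) L"
    by (rule cycprod_closed_walk) (use assms in \<open>simp add: L_def\<close>)
  have "walkprod M w p = walkprod M w (a + (L + (p - b)))"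
    using assms by (simp add: L_def)
  also have "\<dots> = walkprod M w a * walkprod M (\<lambda>m. w (a + m)) L
      * walkprod M (\<lambda>m. w (a + L + m)) (p - b)"
    by (simp add: walkprod_add mult.assoc add.assoc)
  also have "walkprod M w a = walkprod M v a"
    by (rule walkprod_cong) (use assms in \<open>auto simp: v_def L_def\<close>)
  also have "walkprod M (\<lambda>m. w (a + L + m)) (p - b) = walkprod M (\<lambda>m. v (a + m)) (p - b)"
    by (rule walkprod_cong) (simp add: v_def add_ac)
  also have "walkprod M v a * walkprod M (\<lambda>m. w (a + m)) L * walkprod M (\<lambda>m. v (a + m)) (p - b)
      = walkprod M v (a + (p - b)) * walkprod M (\<lambda>m. w (a + m)) L"
    by (simp add: walkprod_add mult_ac)
  finally have "walkprod M w p = walkprod M v (a + (p - b)) * walkprod M (\<lambda>m. w (a + m)) L" .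
  moreover have "p - (b - a) = a + (p - b)"
    using assms by simp
  ultimately show ?thesis
    using cycle unfolding v_def L_def by simp
qed

lemma walkprod_le_mpow: "walkprod M w p \<le> mpow M p (w 0) (w p)"
proof (induction p)
  case 0
  then show ?case by (simp add: walkprod_def idm_def)
next
  case (Suc p)
  have "walkprod M w (Suc p) = walkprod M w p * M (w p) (w (Suc p))"
    by (simp add: walkprod_def)
  also have "\<dots> \<le> mpow M p (w 0) (w p) * M (w p) (w (Suc p))"
    using Suc by (rule mult_right_mono) simp
  also have "\<dots> \<le> mpow M (Suc p) (w 0) (w (Suc p))"
    unfolding mpow.simps mmul_def by (intro member_le_sum) auto
  finally show ?case .
qed

lemma mpow_mult_leI:
  fixes M :: "'n::finite \<Rightarrow> 'n \<Rightarrow> 'a::idem_semifield"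
  assumes "\<And>w. w 0 = i \<Longrightarrow> w p = j \<Longrightarrow> walkprod M w p * z \<le> c"
  shows "mpow M p i j * z \<le> c"
  using assms
proof (induction p arbitrary: j z)
  case 0
  then show ?case
    using "0.prems"[of "\<lambda>_. i"] by (auto simp: idm_def walkprod_def)
next
  case (Suc p)
  have "mpow M p i k * (M k j * z) \<le> c" for k
  proof (rule Suc.IH)
    fix w assume "w 0 = i" "w p = k"
    let ?w = "\<lambda>m. if m \<le> p then w m else j"
    have "walkprod M ?w (Suc p) = walkprod M w p * M k j"
      unfolding walkprod_def using \<open>w p = k\<close> by (auto intro!: prod.cong)
    then show "walkprod M w p * (M k j * z) \<le> c"
      using Suc.prems[of ?w] \<open>w 0 = i\<close> by (simp add: mult.assoc)
  qed
  then show ?case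
    by (simp add: mmul_def sum_distrib_right sum_le_iff mult.assoc)
qed

lemma mpow_le_mstar: "p < CARD('n) \<Longrightarrow> mpow M p i j \<le> mstar (M :: 'n::finite \<Rightarrow> _) i j"
  unfolding mstar_def by (intro member_le_sum) auto

lemma walkprod_le_mstar:
  fixes M :: "'n::finite \<Rightarrow> 'n \<Rightarrow> 'a::idem_semifield"
  assumes "spec_rad M \<le> 1"
  shows "walkprod M w p \<le> mstar M (w 0) (w p)"
proof (induction p arbitrary: w rule: less_induct)
  case (less p)
  show ?case
  proof (cases "p < CARD('n)")
    case True
    then show ?thesis using walkprod_le_mpow mpow_le_mstar order_trans by blast
  next
    case False
    obtain a b where ab: "a < b" "b \<le> CARD('n)" "w a = w b"
      by (rule walk_revisits)
    have "b \<le> p"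
      using ab(2) False by linarith
    define v where "v = (\<lambda>m. if m < a then w m else w (m + (b - a)))"
    have "walkprod M w p = walkprod M v (p - (b - a)) * cycprod M (map (\<lambda>m. w (a + m)) [0..<b - a])"
      unfolding v_def using ab \<open>b \<le> p\<close> by (intro walkprod_remove_cycle) auto
    also have "\<dots> \<le> walkprod M v (p - (b - a)) * 1"
      using ab by (intro mult_left_mono cycprod_le_1 assms) auto
    also have "\<dots> \<le> mstar M (v 0) (v (p - (b - a)))"
      using less.IH[of "p - (b - a)" v] ab \<open>b \<le> p\<close> by simp
    also have "v 0 = w 0"
      using ab by (cases "a = 0") (simp_all add: v_def)
    also have "v (p - (b - a)) = w p"
    proof -
      have "\<not> p - (b - a) < a" "p - (b - a) + (b - a) = p"
        using ab \<open>b \<le> p\<close> by arith+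
      then show ?thesis
        by (simp add: v_def)
    qed
    finally show ?thesis .
  qed
qed

lemma mult_mstar_le:
  fixes M :: "'n::finite \<Rightarrow> 'n \<Rightarrow> 'a::idem_semifield"
  assumes "spec_rad M \<le> 1"
  shows "M i j * mstar M j k \<le> mstar M i k"
proof -
  have "mpow M p j k * M i j \<le> mstar M i k" for p
  proof (rule mpow_mult_leI)
    fix w assume "w 0 = j" "w p = k"
    let ?w = "\<lambda>m. case m of 0 \<Rightarrow> i | Suc m \<Rightarrow> w m"
    have "walkprod M w p * M i j = walkprod M ?w (Suc p)"
      unfolding walkprod_def prod.lessThan_Suc_shift using \<open>w 0 = j\<close> by (simp add: mult.commute)
    also have "\<dots> \<le> mstar M i k"
      using walkprod_le_mstar[OF assms, of ?w "Suc p"] \<open>w p = k\<close> by simp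
    finally show "walkprod M w p * M i j \<le> mstar M i k" .
  qed
  then show ?thesis
    unfolding mstar_def by (simp add: sum_distrib_left sum_le_iff mult.commute)
qed

section \<open>Sub-eigenvectors and the Kleene star\<close>

lemma walkprod_mult_le:
  assumes "\<And>i j. M i j * x j \<le> x i"
  shows "walkprod M w p * x (w p) \<le> x (w 0)"
proof (induction p)
  case 0
  then show ?case by (simp add: walkprod_def)
next
  case (Suc p)
  have "walkprod M w (Suc p) * x (w (Suc p))
      = walkprod M w p * (M (w p) (w (Suc p)) * x (w (Suc p)))"
    by (simp add: walkprod_def mult.assoc)
  also have "\<dots> \<le> walkprod M w p * x (w p)"
    using assms by (rule mult_left_mono) simp
  also have "\<dots> \<le> x (w 0)"
    by (rule Suc)
  finally show ?case .
qed

lemma mvec_mstar_fixed: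
  fixes M :: "'n::finite \<Rightarrow> 'n \<Rightarrow> 'a::idem_semifield"
  assumes sub: "\<And>i j. M i j * x j \<le> x i"
  shows "mvec (mstar M) x = x"
proof
  fix i
  have "mpow M p i j * x j \<le> x i" for p j
  proof (rule mpow_mult_leI)
    fix w assume "w 0 = i" "w p = j"
    have "walkprod M w p * x (w p) \<le> x (w 0)"
      by (rule walkprod_mult_le) (rule sub)
    with \<open>w 0 = i\<close> \<open>w p = j\<close> show "walkprod M w p * x j \<le> x i"
      by simp
  qed
  then have "mvec (mstar M) x i \<le> x i"
    unfolding mvec_def mstar_def by (simp add: sum_distrib_right sum_le_iff)
  moreover have "x i \<le> mvec (mstar M) x i"
  proof -
    have "1 \<le> mstar M i i"
      using mpow_le_mstar[of 0 M i i] by (simp add: idm_def)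
    then have "1 * x i \<le> mstar M i i * x i"
      by (rule mult_right_mono) simp
    also have "\<dots> \<le> mvec (mstar M) x i"
      unfolding mvec_def by (intro member_le_sum) auto
    finally show ?thesis by simp
  qed
  ultimately show "mvec (mstar M) x i = x i" by simp
qed

lemma mvec_mstar_subeigen:
  fixes M :: "'n::finite \<Rightarrow> 'n \<Rightarrow> 'a::idem_semifield"
  assumes "spec_rad M \<le> 1"
  shows "M i j * mvec (mstar M) u j \<le> mvec (mstar M) u i"
proof -
  have "M i j * (mstar M j k * u k) \<le> mvec (mstar M) u i" for k
  proof -
    have "M i j * mstar M j k \<le> mstar M i k"
      using assms by (rule mult_mstar_le)
    then have "M i j * (mstar M j k * u k) \<le> mstar M i k * u k"
      unfolding mult.assoc[symmetric] by (rule mult_right_mono) simp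
    also have "\<dots> \<le> mvec (mstar M) u i"
      unfolding mvec_def by (intro member_le_sum) auto
    finally show ?thesis .
  qed
  then have "(\<Sum>k\<in>UNIV. M i j * (mstar M j k * u k)) \<le> mvec (mstar M) u i"
    by (simp add: sum_le_iff)
  then show ?thesis
    by (simp add: mvec_def sum_distrib_left)
qed

lemma subeigen_iff_mvec_mstar_fixed:
  fixes M :: "'n::finite \<Rightarrow> 'n \<Rightarrow> 'a::idem_semifield"
  assumes "spec_rad M \<le> 1"
  shows "(\<forall>i j. M i j * x j \<le> x i) \<longleftrightarrow> mvec (mstar M) x = x"
proof
  assume "\<forall>i j. M i j * x j \<le> x i"
  then show "mvec (mstar M) x = x"
    by (intro mvec_mstar_fixed) blast
next
  assume "mvec (mstar M) x = x"
  then show "\<forall>i j. M i j * x j \<le> x i"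
    using mvec_mstar_subeigen[OF assms, of _ _ x] by simp
qed

lemma mvec_mstar_idem:
  fixes M :: "'n::finite \<Rightarrow> 'n \<Rightarrow> 'a::idem_semifield"
  assumes "spec_rad M \<le> 1"
  shows "mvec (mstar M) (mvec (mstar M) u) = mvec (mstar M) u"
  using mvec_mstar_subeigen[OF assms] by (rule mvec_mstar_fixed)

lemma regular_mvec_mstar:
  fixes M :: "'n::finite \<Rightarrow> 'n \<Rightarrow> 'a::idem_semifield"
  assumes nonzero: "\<And>i j. M i j \<noteq> 0" and "u \<noteq> (\<lambda>_. 0)"
  shows "regular (mvec (mstar M) u)"
  unfolding regular_def
proof
  fix i
  obtain j where "u j \<noteq> 0"
    using \<open>u \<noteq> (\<lambda>_. 0)\<close> by auto
  define w :: "nat \<Rightarrow> 'n" where "w = (\<lambda>m. if m = 0 then i else j)"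
  define p :: nat where "p = (if i = j then 0 else 1)"
  have "p < CARD('n)"
  proof (cases "i = j")
    case False
    have "card {i, j} \<le> CARD('n)" by (rule card_mono) auto
    with False show ?thesis by (simp add: p_def)
  qed (simp add: p_def)
  have "walkprod M w p \<noteq> 0"
    using nonzero by (simp add: walkprod_def p_def w_def)
  have "walkprod M w p * u j \<le> mstar M i j * u j"
    using walkprod_le_mpow[of M w p] mpow_le_mstar[OF \<open>p < CARD('n)\<close>, of M i j]
    by (intro mult_right_mono) (auto simp: w_def p_def)
  also have "\<dots> \<le> mvec (mstar M) u i"
    unfolding mvec_def by (intro member_le_sum) auto
  finally show "mvec (mstar M) u i \<noteq> 0"
    using \<open>walkprod M w p \<noteq> 0\<close> \<open>u j \<noteq> 0\<close> by auto
qed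

lemma mvec_mstar_fixed_points:
  fixes M :: "'n::finite \<Rightarrow> 'n \<Rightarrow> 'a::idem_semifield"
  assumes "spec_rad M \<le> 1" and nonzero: "\<And>i j. M i j \<noteq> 0"
  shows "{x. regular x \<and> mvec (mstar M) x = x} = {mvec (mstar M) u | u. u \<noteq> (\<lambda>_. 0)}"
proof (rule set_eqI, rule iffI)
  fix x assume "x \<in> {x. regular x \<and> mvec (mstar M) x = x}"
  then have "regular x" "x = mvec (mstar M) x"
    by auto
  moreover have "x \<noteq> (\<lambda>_. 0)"
    using \<open>regular x\<close> unfolding regular_def by fastforce
  ultimately show "x \<in> {mvec (mstar M) u | u. u \<noteq> (\<lambda>_. 0)}"
    by blast
next
  fix x assume "x \<in> {mvec (mstar M) u | u. u \<noteq> (\<lambda>_. 0)}"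
  then obtain u where x: "x = mvec (mstar M) u" and "u \<noteq> (\<lambda>_. 0)"
    by blast
  have "regular x"
    unfolding x using nonzero \<open>u \<noteq> (\<lambda>_. 0)\<close> by (rule regular_mvec_mstar)
  moreover have "mvec (mstar M) x = x"
    unfolding x by (rule mvec_mstar_idem[OF assms(1)])
  ultimately show "x \<in> {x. regular x \<and> mvec (mstar M) x = x}"
    by simp
qed

section \<open>The distance to a consistent matrix\<close>

definition conj_form :: "('n::finite \<Rightarrow> 'n \<Rightarrow> 'a::idem_semifield) \<Rightarrow> ('n \<Rightarrow> 'a) \<Rightarrow> 'a" where
  "conj_form A x = (\<Sum>i\<in>UNIV. \<Sum>j\<in>UNIV. inverse (x i) * A i j * x j)"

lemma conj_form_le_iff: "conj_form A x \<le> c \<longleftrightarrow> (\<forall>i j. inverse (x i) * A i j * x j \<le> c)"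
  unfolding conj_form_def by (simp add: sum_le_iff)

lemma le_conj_form: "inverse (x i) * A i j * x j \<le> conj_form A x"
  using conj_form_le_iff[of A x "conj_form A x"] by simp

lemma mconj_outer_conj:
  assumes "regular x"
  shows "mconj (outer_conj x) = outer_conj x"
proof (intro ext)
  fix i j
  have "x j * inverse (x i) * (x i * inverse (x j)) = (x i * inverse (x i)) * (x j * inverse (x j))"
    by (simp add: mult_ac)
  also have "\<dots> = 1"
    using assms by (simp add: regular_def right_inverse)
  finally show "mconj (outer_conj x) i j = outer_conj x i j"
    unfolding mconj_def outer_conj_def by (rule inverse_eq_of_mult_eq_1)
qed

lemma mdist_outer_conj:
  assumes "mconj A = A" "regular x"
  shows "mdist A (outer_conj x) = conj_form A x"
proof -
  have "mtrace (mmul (outer_conj x) A) = conj_form A x"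
    unfolding mtrace_def mmul_def outer_conj_def conj_form_def
    by (subst sum.swap) (simp add: mult_ac)
  moreover have "mtrace (mmul A (outer_conj x)) = conj_form A x"
    unfolding mtrace_def mmul_def outer_conj_def conj_form_def by (simp add: mult_ac)
  ultimately show ?thesis
    unfolding mdist_def mconj_outer_conj[OF \<open>regular x\<close>] \<open>mconj A = A\<close> by (simp add: add_idem)
qed

lemma conj_form_le_iff_subeigen:
  assumes "c \<noteq> 0" "regular x"
  shows "conj_form A x \<le> c \<longleftrightarrow> (\<forall>i j. inverse c * A i j * x j \<le> x i)"
proof -
  have "inverse (x i) * A i j * x j \<le> c \<longleftrightarrow> inverse c * A i j * x j \<le> x i" for i j
  proof -
    have "x i \<noteq> 0"
      using \<open>regular x\<close> by (simp add: regular_def)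
    then have "inverse c * x i \<noteq> 0"
      using \<open>c \<noteq> 0\<close> by (simp add: inverse_neq_0)
    moreover have "inverse (x i) * A i j * x j * (inverse c * x i)
        = inverse c * A i j * x j * (inverse (x i) * x i)"
      by (simp add: mult_ac)
    moreover have "c * (inverse c * x i) = x i"
      using \<open>c \<noteq> 0\<close> by (simp add: right_inverse flip: mult.assoc)
    ultimately show ?thesis
      using mult_le_cancel_right_nonzero[of "inverse c * x i" "inverse (x i) * A i j * x j" c]
        \<open>x i \<noteq> 0\<close> by (simp add: inverse_mult_self)
  qed
  then show ?thesis
    by (simp add: conj_form_le_iff)
qed

lemma prod_lessThan_rotate:
  fixes k :: nat
  assumes "0 < k"
  shows "(\<Prod>m<k. f ((m + 1) mod k)) = (\<Prod>m<k. f m :: 'a::comm_monoid_mult)"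
proof -
  obtain k' where k: "k = Suc k'" using assms by (cases k) auto
  have "(\<Prod>m<k. f ((m + 1) mod k)) = (\<Prod>m<k'. f ((m + 1) mod k)) * f 0"
    by (simp add: k)
  also have "(\<Prod>m<k'. f ((m + 1) mod k)) = (\<Prod>m<k'. f (Suc m))"
    by (rule prod.cong) (auto simp: k)
  also have "(\<Prod>m<k'. f (Suc m)) * f 0 = (\<Prod>m<k. f m)"
    unfolding k prod.lessThan_Suc_shift by (rule mult.commute)
  finally show ?thesis .
qed

lemma cycprod_diagonal_similarity:
  assumes "regular x"
  shows "cycprod (\<lambda>i j. inverse (x i) * A i j * x j) is = cycprod A is"
proof (cases "is = []")
  case False
  let ?k = "length is"
  have "cycprod (\<lambda>i j. inverse (x i) * A i j * x j) is
      = (\<Prod>m<?k. inverse (x (is ! m))) * cycprod A is * (\<Prod>m<?k. x (is ! ((m + 1) mod ?k)))"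
    by (simp add: cycprod_def prod.distrib)
  also have "(\<Prod>m<?k. x (is ! ((m + 1) mod ?k))) = (\<Prod>m<?k. x (is ! m))"
    using False by (intro prod_lessThan_rotate) simp
  also have "(\<Prod>m<?k. inverse (x (is ! m))) * cycprod A is * (\<Prod>m<?k. x (is ! m))
      = (\<Prod>m<?k. inverse (x (is ! m)) * x (is ! m)) * cycprod A is"
    by (simp add: prod.distrib mult_ac)
  also have "\<dots> = cycprod A is"
    using \<open>regular x\<close> by (simp add: regular_def inverse_mult_self)
  finally show ?thesis .
qed (simp add: cycprod_def)

lemma spec_rad_le_conj_form:
  fixes A :: "'n::finite \<Rightarrow> 'n \<Rightarrow> 'a::idem_semifield"
  assumes "regular x"
  shows "spec_rad A \<le> conj_form A x"
  unfolding spec_rad_le_iff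
proof (intro allI impI)
  fix "is" :: "'n list"
  have "cycprod A is = cycprod (\<lambda>i j. inverse (x i) * A i j * x j) is"
    by (simp add: cycprod_diagonal_similarity[OF assms])
  also have "\<dots> \<le> conj_form A x ^ card {..<length is}"
    unfolding cycprod_def by (rule prod_le_power_card) (rule le_conj_form)
  finally show "cycprod A is \<le> conj_form A x ^ length is"
    by simp
qed

lemma spec_rad_le_mdist:
  fixes A :: "'n::finite \<Rightarrow> 'n \<Rightarrow> 'a::idem_semifield"
  assumes "mconj A = A" "regular x"
  shows "spec_rad A \<le> mdist A (outer_conj x)"
  unfolding mdist_outer_conj[OF assms] using assms(2) by (rule spec_rad_le_conj_form)

lemma mdist_eq_spec_rad_iff:
  fixes A :: "'n::finite \<Rightarrow> 'n \<Rightarrow> 'a::idem_semifield"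
  assumes "mconj A = A" "spec_rad A \<noteq> 0" "regular x"
  shows "mdist A (outer_conj x) = spec_rad A
    \<longleftrightarrow> mvec (mstar (\<lambda>i j. inverse (spec_rad A) * A i j)) x = x"
proof -
  have "mdist A (outer_conj x) = spec_rad A \<longleftrightarrow> conj_form A x \<le> spec_rad A"
    unfolding mdist_outer_conj[OF assms(1,3)] using spec_rad_le_conj_form[OF assms(3)]
    by (auto intro: antisym)
  also have "\<dots> \<longleftrightarrow> (\<forall>i j. inverse (spec_rad A) * A i j * x j \<le> x i)"
    by (rule conj_form_le_iff_subeigen[OF assms(2,3)])
  also have "\<dots> \<longleftrightarrow> mvec (mstar (\<lambda>i j. inverse (spec_rad A) * A i j)) x = x"
    by (rule subeigen_iff_mvec_mstar_fixed[OF spec_rad_normalize_le_1[OF assms(2)]])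
  finally show ?thesis .
qed

theorem corollary1:
  fixes A :: "'n::finite \<Rightarrow> 'n \<Rightarrow> 'a::idem_semifield"
  assumes recip: "mconj A = A"
    and nonzero: "\<forall>i j. A i j \<noteq> 0"
  shows "(\<exists>x. regular x \<and> mdist A (outer_conj x) = spec_rad A)
    \<and> (\<forall>x. regular x \<longrightarrow> spec_rad A \<le> mdist A (outer_conj x))
    \<and> {x. regular x \<and> mdist A (outer_conj x) = spec_rad A}
      = {mvec (mstar (\<lambda>i j. inverse (spec_rad A) * A i j)) u | u. u \<noteq> (\<lambda>_. 0)}"
proof -
  let ?B = "\<lambda>i j. inverse (spec_rad A) * A i j"
  have "spec_rad A \<noteq> 0"
    by (rule spec_rad_neq_0) (use nonzero in blast)
  then have "spec_rad ?B \<le> 1" "?B i j \<noteq> 0" for i j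
    using nonzero by (simp_all add: spec_rad_normalize_le_1 inverse_neq_0)
  have "{x. regular x \<and> mdist A (outer_conj x) = spec_rad A} = {x. regular x \<and> mvec (mstar ?B) x = x}"
    using mdist_eq_spec_rad_iff[OF recip \<open>spec_rad A \<noteq> 0\<close>] by blast
  also have "\<dots> = {mvec (mstar ?B) u | u. u \<noteq> (\<lambda>_. 0)}"
    by (rule mvec_mstar_fixed_points) fact+
  finally have solutions: "{x. regular x \<and> mdist A (outer_conj x) = spec_rad A}
      = {mvec (mstar ?B) u | u. u \<noteq> (\<lambda>_. 0)}" .
  have "(\<lambda>_. 1) \<noteq> (\<lambda>_. 0 :: 'a)"
    by (simp add: fun_eq_iff)
  then have "\<exists>x. regular x \<and> mdist A (outer_conj x) = spec_rad A"
    using solutions by blast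
  with solutions show ?thesis
    using spec_rad_le_mdist[OF recip] by blast
qed

end
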